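(* Let $K\ge2$ and $d\ge1$ be integers with $d=2$ or $K\le d+1$. Then no Softmax Code $\mathbf W\in\mathrm{OB}(d,K)$ has a rattler; i.e., for every Softmax Code $\mathbf W$ and every $k\in[K]$, $\operatorname{dist}(\mathbf w_k,\{\mathbf w_j\}_{j\ne k})=\min_{k'}\operatorname{dist}(\mathbf w_{k'},\{\mathbf w_j\}_{j\ne k'})$.
   Context: $\mathrm{OB}(d,K)$ is the set of real $d\times K$ matrices with unit-norm columns $\mathbf w_1,\dots,\mathbf w_K$. $\operatorname{dist}(\mathbf v,\mathcal W)=\inf\{\|\mathbf v-\mathbf w\|_2:\mathbf w\in\operatorname{conv}(\mathcal W)\}$; $\rho_{\text{one-vs-rest}}(\mathbf W)=\min_k\operatorname{dist}(\mathbf w_k,\{\mathbf w_j\}_{j\ne k})$. A Softmax Code is a maximizer of $\rho_{\text{one-vs-rest}}$ over $\mathrm{OB}(d,K)$. A rattler of $\mathbf W$ is an index $k$ with $\operatorname{dist}(\mathbf w_k,\{\mathbf w_j\}_{j\ne k})\ne\rho_{\text{one-vs-rest}}(\mathbf W)$. *)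

theory Defs
  imports "HOL-Analysis.Analysis"
begin

text \<open>A d x K matrix is represented by its K columns W 0, ..., W (K-1), each in real^'d
  (so d = CARD('d)). Columns indexed outside {..<K} are irrelevant.\<close>

definition OB :: "nat \<Rightarrow> (nat \<Rightarrow> real^'d) set" where
  "OB K = {W. \<forall>k<K. norm (W k) = 1}"

definition dist_hull :: "real^'d \<Rightarrow> (real^'d) set \<Rightarrow> real" where
  "dist_hull v S = Inf {norm (v - w) | w. w \<in> convex hull S}"

definition one_vs_rest_dist :: "nat \<Rightarrow> (nat \<Rightarrow> real^'d) \<Rightarrow> nat \<Rightarrow> real" where
  "one_vs_rest_dist K W k = dist_hull (W k) {W j | j. j < K \<and> j \<noteq> k}"

definition rho_one_vs_rest :: "nat \<Rightarrow> (nat \<Rightarrow> real^'d) \<Rightarrow> real" where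
  "rho_one_vs_rest K W = Min {one_vs_rest_dist K W k | k. k < K}"

definition softmax_code :: "nat \<Rightarrow> (nat \<Rightarrow> real^'d) \<Rightarrow> bool" where
  "softmax_code K W \<longleftrightarrow> W \<in> OB K \<and> (\<forall>W' \<in> (OB K :: (nat \<Rightarrow> real^'d) set). rho_one_vs_rest K W' \<le> rho_one_vs_rest K W)"

definition is_rattler :: "nat \<Rightarrow> (nat \<Rightarrow> real^'d) \<Rightarrow> nat \<Rightarrow> bool" where
  "is_rattler K W k \<longleftrightarrow> k < K \<and> one_vs_rest_dist K W k \<noteq> rho_one_vs_rest K W"

end

theory Submission
  imports Defs
begin

(* Let rho* be the largest possible value of the smallest one-vs-rest distance. For
   K <= d + 1 it is K/(K-1), attained by the regular simplex; for d = 2 and K >= 4 it is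
   1 - cos(2 pi/K), attained by the regular K-gon. In both cases every configuration whose
   one-vs-rest distances are all at least rho* has all of them equal to rho*. A Softmax Code
   is at least as good as the extremal configuration, so this applies to it.

   Simplex: the centroid u_k of the other vectors lies in their convex hull, and
   sum_k |w_k - u_k|^2 = K (K/(K-1))^2 - K |sum_j w_j|^2 / (K-1)^2 <= K rho*^2.
   Polygon: order the points by angle. If the two neighbours of a point span an arc t <= pi,
   their chord passes within 1 - cos(t/2) of it; so each of these K arcs is at least 4 pi/K,
   and as they sum to 4 pi, all of them equal 4 pi/K. *)

lemma dist_hull_le_norm:
  assumes "x \<in> convex hull S"
  shows "dist_hull v S \<le> norm (v - x)"
  unfolding dist_hull_def
  by (rule cInf_lower) (use assms in \<open>auto intro: bdd_belowI[where m=0]\<close>)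

lemma one_minus_le_dist_hull:
  fixes w :: "real^'d"
  assumes "S \<noteq> {}" and "\<And>s. s \<in> S \<Longrightarrow> inner s w \<le> c" and "norm w = 1"
  shows "1 - c \<le> dist_hull w S"
  unfolding dist_hull_def
proof (rule cInf_greatest)
  show "{norm (w - x) |x. x \<in> convex hull S} \<noteq> {}"
    using assms(1) hull_subset by fastforce
next
  fix y assume "y \<in> {norm (w - x) |x. x \<in> convex hull S}"
  then obtain x where x: "x \<in> convex hull S" "y = norm (w - x)" by auto
  have "convex hull S \<subseteq> {x. inner x w \<le> c}"
    by (rule hull_minimal) (use assms(2) convex_halfspace_le[of w c] in \<open>auto simp: inner_commute\<close>)
  with x have "inner x w \<le> c" by auto
  moreover have "inner (w - x) w \<le> norm (w - x) * norm w" by (rule norm_cauchy_schwarz)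
  moreover have "inner w w = 1" using assms(3) by (simp add: power2_norm_eq_inner[symmetric])
  ultimately show "1 - c \<le> y" using x assms(3) by (simp add: inner_diff_left)
qed

lemma rho_one_vs_rest_le:
  "k < K \<Longrightarrow> rho_one_vs_rest K W \<le> one_vs_rest_dist K W k"
  unfolding rho_one_vs_rest_def by (rule Min_le) auto

lemma le_rho_one_vs_rest:
  assumes "1 \<le> K" and "\<And>k. k < K \<Longrightarrow> c \<le> one_vs_rest_dist K W k"
  shows "c \<le> rho_one_vs_rest K W"
  unfolding rho_one_vs_rest_def using assms by (subst Min_ge_iff) (auto intro!: exI[of _ 0])

lemma one_minus_le_one_vs_rest_dist:
  fixes W :: "nat \<Rightarrow> real^'d"
  assumes "W \<in> OB K" and "2 \<le> K"
    and "\<And>j k. j < K \<Longrightarrow> k < K \<Longrightarrow> j \<noteq> k \<Longrightarrow> inner (W j) (W k) \<le> c"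
  shows "\<forall>k<K. 1 - c \<le> one_vs_rest_dist K W k"
proof (intro allI impI)
  fix k assume k: "k < K"
  define j where "j = (if k = 0 then 1 else 0::nat)"
  have "j < K" "j \<noteq> k" using \<open>2 \<le> K\<close> by (auto simp: j_def)
  then show "1 - c \<le> one_vs_rest_dist K W k"
    unfolding one_vs_rest_dist_def
    by (intro one_minus_le_dist_hull) (use assms k in \<open>auto simp: OB_def\<close>)
qed

lemma inj_on_if_one_vs_rest_dist_pos:
  fixes W :: "nat \<Rightarrow> real^'d"
  assumes "\<forall>k<K. 0 < one_vs_rest_dist K W k"
  shows "inj_on W {..<K}"
proof (rule inj_onI, rule ccontr)
  fix j k assume "j \<in> {..<K}" "k \<in> {..<K}" "W j = W k" "j \<noteq> k"
  then have "W j \<in> {W i | i. i < K \<and> i \<noteq> k}" by blast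
  then have "W j \<in> convex hull {W i | i. i < K \<and> i \<noteq> k}" by (rule hull_inc)
  then have "one_vs_rest_dist K W k \<le> norm (W k - W j)"
    unfolding one_vs_rest_dist_def by (rule dist_hull_le_norm)
  with assms \<open>k \<in> {..<K}\<close> \<open>W j = W k\<close> show False by force
qed

lemma sum_le_card_mult_imp_eq:
  fixes f :: "'a \<Rightarrow> real" and c :: real
  assumes "finite A" and "\<forall>i\<in>A. c \<le> f i" and "sum f A \<le> real (card A) * c"
  shows "\<forall>i\<in>A. f i = c"
proof -
  have "(\<Sum>i\<in>A. f i - c) \<le> 0" using assms(3) by (simp add: sum_subtractf mult.commute)
  moreover have "0 \<le> (\<Sum>i\<in>A. f i - c)" using assms(2) by (intro sum_nonneg) simp
  ultimately have "(\<Sum>i\<in>A. f i - c) = 0" by linarith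
  then show ?thesis using sum_nonneg_eq_0_iff[of A "\<lambda>i. f i - c"] assms(1,2) by auto
qed

lemma softmax_code_dists_eq_rho:
  fixes W W0 :: "nat \<Rightarrow> real^'d"
  assumes "1 \<le> K" and code: "softmax_code K W"
    and W0: "W0 \<in> OB K" "\<forall>k<K. r \<le> one_vs_rest_dist K W0 k"
    and equalizing: "\<And>V :: nat \<Rightarrow> real^'d. V \<in> OB K \<Longrightarrow> \<forall>k<K. r \<le> one_vs_rest_dist K V k \<Longrightarrow>
        \<forall>k<K. one_vs_rest_dist K V k = r"
  shows "\<forall>k<K. one_vs_rest_dist K W k = rho_one_vs_rest K W"
proof -
  have W: "W \<in> OB K" using code by (simp add: softmax_code_def)
  have "r \<le> rho_one_vs_rest K W0" using W0 \<open>1 \<le> K\<close> by (auto intro: le_rho_one_vs_rest)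
  also have "\<dots> \<le> rho_one_vs_rest K W" using code W0 by (auto simp: softmax_code_def)
  finally have "\<forall>k<K. r \<le> one_vs_rest_dist K W k" using rho_one_vs_rest_le by (blast intro: order_trans)
  with W have eq: "\<forall>k<K. one_vs_rest_dist K W k = r" by (rule equalizing)
  then have "rho_one_vs_rest K W = r"
    using rho_one_vs_rest_le[of 0 K W] le_rho_one_vs_rest[of K r W] \<open>1 \<le> K\<close> by force
  with eq show ?thesis by simp
qed

section \<open>The regular simplex\<close>

lemma sum_sq_dist_centroid_of_others_le:
  fixes w :: "nat \<Rightarrow> 'a::real_inner"
  assumes "2 \<le> K" and unit: "\<And>k. k < K \<Longrightarrow> norm (w k) = 1"
  shows "(\<Sum>k<K. (norm (w k - (\<Sum>j\<in>{..<K}-{k}. w j) /\<^sub>R (real K - 1)))\<^sup>2)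
           \<le> real K * (real K / (real K - 1))\<^sup>2"
proof -
  define S where "S = (\<Sum>j<K. w j)"
  define a where "a = real K / (real K - 1)"
  define b where "b = 1 / (real K - 1)"
  have K1: "real K - 1 > 0" using \<open>2 \<le> K\<close> by simp
  have diff: "w k - (\<Sum>j\<in>{..<K}-{k}. w j) /\<^sub>R (real K - 1) = a *\<^sub>R w k - b *\<^sub>R S" if "k < K" for k
  proof -
    have ab: "a = 1 + b" using K1 by (simp add: a_def b_def field_simps)
    have others: "(\<Sum>j\<in>{..<K}-{k}. w j) = S - w k" using that by (simp add: S_def sum_diff1)
    show ?thesis unfolding others ab b_def by (simp add: scaleR_diff_right algebra_simps inverse_eq_divide)
  qed
  have "(norm (a *\<^sub>R w k - b *\<^sub>R S))\<^sup>2 = a\<^sup>2 - 2*a*b * inner (w k) S + b\<^sup>2 * inner S S"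
    if "k < K" for k
  proof -
    have "inner (w k) (w k) = 1" using unit[OF that] by (simp flip: power2_norm_eq_inner)
    then show ?thesis unfolding power2_norm_eq_inner
      by (simp add: inner_diff_left inner_diff_right inner_commute
          power2_eq_square algebra_simps)
  qed
  then have "(\<Sum>k<K. (norm (w k - (\<Sum>j\<in>{..<K}-{k}. w j) /\<^sub>R (real K - 1)))\<^sup>2)
      = (\<Sum>k<K. a\<^sup>2 - 2*a*b * inner (w k) S + b\<^sup>2 * inner S S)"
    by (intro sum.cong) (simp_all add: diff)
  also have "\<dots> = real K * a\<^sup>2 - (2*a - real K * b) * b * inner S S"
    by (simp add: sum.distrib sum_subtractf algebra_simps power2_eq_square
        flip: sum_distrib_left inner_sum_left S_def)
  also have "\<dots> = real K * a\<^sup>2 - real K * (b\<^sup>2 * inner S S)"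
    by (simp add: a_def b_def power2_eq_square)
  also have "\<dots> \<le> real K * a\<^sup>2" by simp
  finally show ?thesis by (simp add: a_def)
qed

lemma one_vs_rest_dists_eq_simplex_bound:
  fixes W :: "nat \<Rightarrow> real^'d"
  assumes "2 \<le> K" and W: "W \<in> OB K"
    and bound: "\<forall>k<K. real K / (real K - 1) \<le> one_vs_rest_dist K W k"
  shows "\<forall>k<K. one_vs_rest_dist K W k = real K / (real K - 1)"
proof -
  define r where "r = real K / (real K - 1)"
  define u where "u k = (\<Sum>j\<in>{..<K}-{k}. W j) /\<^sub>R (real K - 1)" for k
  have K1: "real K - 1 > 0" using \<open>2 \<le> K\<close> by simp
  have "u k \<in> convex hull {W j | j. j < K \<and> j \<noteq> k}" if "k < K" for k
  proof -
    have "u k = (\<Sum>j\<in>{..<K}-{k}. (1 / (real K - 1)) *\<^sub>R W j)"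
      by (simp add: u_def scaleR_sum_right divide_inverse_commute)
    also have "\<dots> \<in> convex hull {W j | j. j < K \<and> j \<noteq> k}"
      using that K1 by (intro convex_sum convex_convex_hull) (auto simp: of_nat_diff intro: hull_inc)
    finally show ?thesis .
  qed
  then have le_u: "one_vs_rest_dist K W k \<le> norm (W k - u k)" if "k < K" for k
    unfolding one_vs_rest_dist_def using that by (blast intro: dist_hull_le_norm)
  have r0: "0 \<le> r" using K1 by (simp add: r_def)
  have d0: "0 \<le> one_vs_rest_dist K W k" if "k < K" for k
    using bound r0 that unfolding r_def by (meson order_trans)
  have "(\<Sum>k<K. (one_vs_rest_dist K W k)\<^sup>2) \<le> (\<Sum>k<K. (norm (W k - u k))\<^sup>2)"
    using le_u d0 by (intro sum_mono power_mono) auto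
  also have "\<dots> \<le> real K * r\<^sup>2"
    unfolding u_def r_def using W \<open>2 \<le> K\<close>
    by (intro sum_sq_dist_centroid_of_others_le) (auto simp: OB_def)
  finally have "\<forall>k\<in>{..<K}. (one_vs_rest_dist K W k)\<^sup>2 = r\<^sup>2"
    using bound r0 by (intro sum_le_card_mult_imp_eq) (auto simp: r_def intro: power_mono)
  then show ?thesis using d0 r0 unfolding r_def by simp
qed

lemma regular_simplex_coefficients:
  assumes "1 \<le> n"
  obtains a b :: real
  where "a\<^sup>2 = 1 + 1 / real n" and "a + b * real n = 1 / sqrt (real n)"
    and "2 * a * b + b\<^sup>2 * real n = -1 / real n"
proof -
  define p where "p = sqrt (real n)"
  define a where "a = sqrt (real n + 1) / p"
  define b where "b = (1 / p - a) / real n"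
  have p: "p > 0" "p\<^sup>2 = real n" using \<open>1 \<le> n\<close> by (auto simp: p_def)
  have a2: "a\<^sup>2 = 1 + 1 / real n" using p \<open>1 \<le> n\<close> by (simp add: a_def power_divide field_simps)
  moreover have "a + b * real n = 1 / sqrt (real n)" using \<open>1 \<le> n\<close> by (simp add: b_def p_def)
  moreover have "2 * a * b + b\<^sup>2 * real n = -1 / real n"
  proof -
    have "(2 * a * b + b\<^sup>2 * real n) * real n = (1 / p - a) * (1 / p + a)"
      using \<open>1 \<le> n\<close> by (simp add: b_def field_simps power2_eq_square)
    also have "\<dots> = 1 / p\<^sup>2 - a\<^sup>2" by (simp add: power2_eq_square algebra_simps)
    also have "\<dots> = -1" using p a2 by simp
    finally show ?thesis using \<open>1 \<le> n\<close> by (simp add: field_simps)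
  qed
  ultimately show thesis by (rule that)
qed

lemma regular_simplex_from_orthonormal:
  fixes e :: "nat \<Rightarrow> 'a::real_inner"
  assumes "1 \<le> n"
    and orthonormal: "\<And>i j. i < n \<Longrightarrow> j < n \<Longrightarrow> inner (e i) (e j) = (if i = j then 1 else 0)"
  obtains v :: "nat \<Rightarrow> 'a"
  where "\<And>i j. i \<le> n \<Longrightarrow> j \<le> n \<Longrightarrow> inner (v i) (v j) = (if i = j then 1 else -1 / real n)"
proof -
  define s where "s = (\<Sum>i<n. e i)"
  have es: "inner (e i) s = 1" if "i < n" for i
    using that by (simp add: s_def inner_sum_right orthonormal)
  have ss: "inner s s = real n"
    using inner_sum_left[of e "{..<n}" s, folded s_def] by (simp add: es)
  define p where "p = sqrt (real n)"
  have p: "p > 0" "p\<^sup>2 = real n" using \<open>1 \<le> n\<close> by (auto simp: p_def)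
  obtain a b where a2: "a\<^sup>2 = 1 + 1 / real n" and abn: "a + b * real n = 1 / p"
    and cross: "2 * a * b + b\<^sup>2 * real n = -1 / real n"
    using regular_simplex_coefficients[OF \<open>1 \<le> n\<close>] unfolding p_def by blast
  define v where "v i = (if i < n then a *\<^sub>R e i + b *\<^sub>R s else (-1 / p) *\<^sub>R s)" for i
  have gram: "inner (v i) (v j) = (if i = j then 1 else -1 / real n)" if ij: "i \<le> n" "j \<le> n" for i j
  proof -
    consider "i < n" "j < n" | "i < n" "j = n" | "i = n" "j < n" | "i = n" "j = n"
      using ij by linarith
    then show ?thesis
    proof cases
      case 1
      have "inner (v i) (v j)
          = a*a * inner (e i) (e j) + a*b * inner (e i) s + b*a * inner s (e j) + b*b * inner s s"
        using 1 by (simp add: v_def inner_add_left inner_add_right distrib_left)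
      also have "\<dots> = a\<^sup>2 * inner (e i) (e j) + 2 * a * b + b\<^sup>2 * real n"
        using 1 es[of i] es[of j] ss by (simp add: inner_commute[of s "e j"] power2_eq_square)
      finally show ?thesis using 1 a2 cross by (simp add: orthonormal)
    next
      case 2
      then have "inner (v i) (v j) = - (a + b * real n) / p"
        using p by (simp add: v_def inner_add_left es ss field_simps)
      then show ?thesis using 2 abn p by (simp add: power2_eq_square)
    next
      case 3
      then have "inner (v i) (v j) = - (a + b * real n) / p"
        using p by (simp add: v_def inner_add_right es inner_commute[of s "e j"] ss field_simps)
      then show ?thesis using 3 abn p by (simp add: power2_eq_square)
    next
      case 4
      then show ?thesis using p \<open>1 \<le> n\<close> by (simp add: v_def ss power2_eq_square)
    qed
  qed
  show thesis by (rule that[OF gram])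
qed

lemma simplex_code_exists:
  assumes "2 \<le> K" and "K \<le> CARD('d) + 1"
  obtains W :: "nat \<Rightarrow> real^'d"
  where "W \<in> OB K" and "\<forall>k<K. real K / (real K - 1) \<le> one_vs_rest_dist K W k"
proof -
  define n where "n = K - 1"
  have "card {..<n} \<le> CARD('d)" using assms(2) by (simp add: n_def)
  then obtain f :: "nat \<Rightarrow> 'd" where f: "inj_on f {..<n}"
    using card_le_inj[of "{..<n}" "UNIV :: 'd set"] by auto
  have n: "1 \<le> n" using assms(1) by (simp add: n_def)
  have ortho: "inner (axis (f i) (1::real)) (axis (f j) 1) = (if i = j then 1 else 0)"
    if "i < n" "j < n" for i j
    using f that by (auto simp: inner_axis_axis inj_on_def)
  obtain W :: "nat \<Rightarrow> real^'d"
    where gram: "\<And>i j. i \<le> n \<Longrightarrow> j \<le> n \<Longrightarrow> inner (W i) (W j) = (if i = j then 1 else -1 / real n)"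
    using regular_simplex_from_orthonormal[OF n ortho] by blast
  have "W \<in> OB K"
    using gram by (auto simp: OB_def n_def norm_eq_sqrt_inner)
  moreover have "\<forall>k<K. 1 - (-1 / real n) \<le> one_vs_rest_dist K W k"
    using \<open>W \<in> OB K\<close> assms(1) by (rule one_minus_le_one_vs_rest_dist) (auto simp: gram n_def)
  moreover have "1 - (-1 / real n) = real K / (real K - 1)"
    using assms(1) by (simp add: n_def of_nat_diff field_simps)
  ultimately show thesis using that by simp
qed

section \<open>Points on a circle\<close>

definition circle_point :: "'a::real_vector \<Rightarrow> 'a \<Rightarrow> real \<Rightarrow> 'a" where
  "circle_point u v t = cos t *\<^sub>R u + sin t *\<^sub>R v"

lemma inner_circle_point:
  fixes u v :: "'a::real_inner"
  assumes "norm u = 1" and "norm v = 1" and "inner u v = 0"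
  shows "inner (circle_point u v t) (circle_point u v s) = cos (t - s)"
proof -
  have "inner u u = 1" "inner v v = 1" using assms(1,2) by (simp_all flip: power2_norm_eq_inner)
  then show ?thesis using assms(3)
    by (simp add: circle_point_def inner_add_left inner_add_right inner_commute[of v u] cos_diff)
qed

lemma norm_circle_point:
  fixes u v :: "'a::real_inner"
  assumes "norm u = 1" and "norm v = 1" and "inner u v = 0"
  shows "norm (circle_point u v t) = 1"
  using inner_circle_point[OF assms, of t t] by (simp add: norm_eq_sqrt_inner)

lemma circle_point_add:
  "circle_point u v (t + g) = cos g *\<^sub>R circle_point u v t + sin g *\<^sub>R circle_point u v (t + pi / 2)"
  by (simp add: circle_point_def cos_add sin_add algebra_simps)

lemma circle_point_rotate:
  "circle_point (circle_point u v t) (circle_point u v (t + pi / 2)) g = circle_point u v (t + g)"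
  by (simp add: circle_point_def[of "circle_point u v t"] circle_point_add[of u v t g])

lemma circle_point_add_2pi: "circle_point u v (t + 2 * pi) = circle_point u v t"
  by (simp add: circle_point_def)

lemma circle_point_diff_2pi: "circle_point u v (t - 2 * pi) = circle_point u v t"
  using circle_point_add_2pi[of u v "t - 2 * pi"] by simp

lemma cos_half_sum_mult_sin_sum_le:
  assumes "0 \<le> g1" and "0 \<le> g2" and "g1 + g2 \<le> pi"
  shows "cos ((g1 + g2) / 2) * (sin g1 + sin g2) \<le> sin (g1 + g2)"
proof -
  define \<alpha> where "\<alpha> = (g1 + g2) / 2"
  define \<delta> where "\<delta> = (g2 - g1) / 2"
  have "2 * sin \<alpha> * cos \<alpha> \<ge> 0"
    using assms by (intro mult_nonneg_nonneg sin_ge_zero cos_ge_zero) (auto simp: \<alpha>_def)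
  then have "(2 * sin \<alpha> * cos \<alpha>) * cos \<delta> \<le> 2 * sin \<alpha> * cos \<alpha>"
    by (rule mult_left_le[OF cos_le_one])
  moreover have "sin g1 + sin g2 = 2 * sin \<alpha> * cos \<delta>"
    using sin_plus_sin[of g2 g1] by (simp add: \<alpha>_def \<delta>_def add.commute)
  moreover have "g1 + g2 = 2 * \<alpha>" by (simp add: \<alpha>_def)
  then have "sin (g1 + g2) = 2 * sin \<alpha> * cos \<alpha>" by (simp add: sin_double)
  ultimately show ?thesis by (simp add: \<alpha>_def algebra_simps)
qed

lemma closed_segment_circle_points_crossing:
  fixes u v :: "'a::real_vector"
  assumes "0 < sin g1" and "0 < sin g2"
  shows "((sin g2 * cos g1 + sin g1 * cos g2) / (sin g1 + sin g2)) *\<^sub>R u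
           \<in> closed_segment (circle_point u v (- g1)) (circle_point u v g2)"
proof -
  define s1 where "s1 = sin g1"
  define s2 where "s2 = sin g2"
  define \<mu> where "\<mu> = s1 / (s1 + s2)"
  have sum_ne: "s1 + s2 \<noteq> 0" using assms by (simp add: s1_def s2_def)
  have one_minus_\<mu>: "1 - \<mu> = s2 / (s1 + s2)" using sum_ne by (simp add: \<mu>_def field_simps)
  have "0 \<le> \<mu>" "\<mu> \<le> 1" using assms by (simp_all add: \<mu>_def s1_def s2_def)
  then have "(1 - \<mu>) *\<^sub>R circle_point u v (- g1) + \<mu> *\<^sub>R circle_point u v g2
      \<in> closed_segment (circle_point u v (- g1)) (circle_point u v g2)"
    unfolding closed_segment_def by blast
  moreover have "(1 - \<mu>) *\<^sub>R circle_point u v (- g1) + \<mu> *\<^sub>R circle_point u v g2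
      = ((1 - \<mu>) * cos g1 + \<mu> * cos g2) *\<^sub>R u + (\<mu> * s2 - (1 - \<mu>) * s1) *\<^sub>R v"
    by (simp add: circle_point_def s1_def s2_def algebra_simps)
  moreover have "(1 - \<mu>) * cos g1 + \<mu> * cos g2 = (s2 * cos g1 + s1 * cos g2) / (s1 + s2)"
    unfolding one_minus_\<mu> unfolding \<mu>_def by (simp add: add_divide_distrib mult.commute)
  moreover have "\<mu> * s2 - (1 - \<mu>) * s1 = 0"
    unfolding one_minus_\<mu> unfolding \<mu>_def by (simp add: mult.commute)
  ultimately show ?thesis by (simp add: s1_def s2_def)
qed

lemma closed_segment_circle_points_near:
  fixes u v :: "'a::real_inner"
  assumes "norm u = 1" and "norm v = 1" and "inner u v = 0"
    and "0 \<le> g1" and "0 \<le> g2" and "g1 + g2 \<le> pi"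
  shows "\<exists>x \<in> closed_segment (circle_point u v (- g1)) (circle_point u v g2).
           norm (u - x) \<le> 1 - cos ((g1 + g2) / 2)"
proof (cases "g1 = 0 \<or> g2 = 0")
  case True
  then have "u \<in> closed_segment (circle_point u v (- g1)) (circle_point u v g2)"
    by (auto simp: circle_point_def)
  then show ?thesis by (intro bexI[of _ u]) simp_all
next
  case False
  then have pos: "0 < sin g1" "0 < sin g2" using assms(4-6) by (auto intro!: sin_gt_zero)
  define X where "X = (sin g2 * cos g1 + sin g1 * cos g2) / (sin g1 + sin g2)"
  have seg: "X *\<^sub>R u \<in> closed_segment (circle_point u v (- g1)) (circle_point u v g2)"
    unfolding X_def by (rule closed_segment_circle_points_crossing[OF pos])
  have X1: "X \<le> 1"
  proof -
    have "sin g2 * cos g1 \<le> sin g2 * 1" "sin g1 * cos g2 \<le> sin g1 * 1"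
      using pos by (intro mult_left_mono cos_le_one; simp)+
    then have "sin g2 * cos g1 + sin g1 * cos g2 \<le> sin g1 + sin g2" by linarith
    then show ?thesis using pos by (simp add: X_def)
  qed
  have "cos ((g1 + g2) / 2) \<le> X"
  proof -
    have "cos ((g1 + g2) / 2) * (sin g1 + sin g2) \<le> sin (g1 + g2)"
      by (rule cos_half_sum_mult_sin_sum_le[OF assms(4-6)])
    also have "\<dots> = sin g2 * cos g1 + sin g1 * cos g2"
      unfolding sin_add by (simp only: mult.commute add.commute)
    finally show ?thesis using pos by (simp add: X_def le_divide_eq)
  qed
  moreover have "norm (u - X *\<^sub>R u) = 1 - X"
  proof -
    have "u - X *\<^sub>R u = (1 - X) *\<^sub>R u" by (simp add: scaleR_diff_left)
    then show ?thesis
      using assms(1) X1 by (simp only: norm_scaleR mult_1_right abs_of_nonneg diff_ge_0_iff_ge)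
  qed
  ultimately have "norm (u - X *\<^sub>R u) \<le> 1 - cos ((g1 + g2) / 2)" by linarith
  with seg show ?thesis by blast
qed

lemma cos_le_cos_if_between:
  assumes "0 \<le> a" and "a \<le> pi" and "a \<le> x" and "x \<le> 2 * pi - a"
  shows "cos x \<le> cos a"
proof (cases "x \<le> pi")
  case True
  then show ?thesis using assms by (subst cos_mono_le_eq) auto
next
  case False
  then have "cos (2 * pi - x) \<le> cos a" using assms by (subst cos_mono_le_eq) auto
  then show ?thesis by simp
qed

lemma cos_two_pi_frac_diff_le:
  fixes j k K :: nat
  assumes "j < K" and "k < K" and "j \<noteq> k"
  shows "cos (2 * pi * j / K - 2 * pi * k / K) \<le> cos (2 * pi / K)"
proof -
  have K: "2 \<le> real K" using assms by linarith
  define m where "m = \<bar>real j - real k\<bar>"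
  have m: "1 \<le> m" "m \<le> real K - 1" using assms by (auto simp: m_def)
  have "cos (2 * pi * j / K - 2 * pi * k / K) = cos \<bar>2 * pi * (real j - real k) / K\<bar>"
    by (simp add: diff_divide_distrib right_diff_distrib)
  also have "\<dots> = cos (2 * pi * m / K)"
    by (simp add: m_def abs_mult)
  also have "\<dots> \<le> cos (2 * pi / K)"
  proof (rule cos_le_cos_if_between)
    show "2 * pi / K \<le> pi" using K by (simp add: field_simps)
    show "2 * pi / K \<le> 2 * pi * m / K" using m K by (simp add: divide_right_mono)
    have "2 * pi * m / K \<le> 2 * pi * (real K - 1) / K" using m K by (simp add: divide_right_mono)
    also have "\<dots> = 2 * pi - 2 * pi / K" using K by (simp add: field_simps)
    finally show "2 * pi * m / K \<le> 2 * pi - 2 * pi / K" .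
  qed simp
  finally show ?thesis .
qed

lemma planar_circle_parametrization:
  assumes "CARD('d) = 2"
  obtains u v :: "real^'d" where "norm u = 1" and "norm v = 1" and "inner u v = 0"
    and "\<And>x. norm x = 1 \<Longrightarrow> \<exists>t. 0 \<le> t \<and> t < 2 * pi \<and> x = circle_point u v t"
proof -
  obtain e1 e2 :: 'd where e: "e1 \<noteq> e2" "UNIV = {e1, e2}"
    using assms by (auto simp: card_2_iff)
  show thesis
  proof (rule that[of "axis e1 1" "axis e2 1"])
    show "inner (axis e1 1) (axis e2 (1::real)) = 0" using e(1) by (simp add: inner_axis_axis)
  next
    fix x :: "real^'d" assume "norm x = 1"
    have x: "x = (x$e1) *\<^sub>R axis e1 1 + (x$e2) *\<^sub>R axis e2 1"
      using e by (auto simp: vec_eq_iff axis_def)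
    have "(x$e1)\<^sup>2 + (x$e2)\<^sup>2 = 1"
      using \<open>norm x = 1\<close> e(1) by (simp add: norm_vec_def L2_set_def e(2))
    then obtain t where "0 \<le> t" "t < 2 * pi" "x$e1 = cos t" "x$e2 = sin t"
      by (rule sincos_total_2pi)
    with x show "\<exists>t. 0 \<le> t \<and> t < 2 * pi \<and> x = circle_point (axis e1 1) (axis e2 1) t"
      by (auto simp: circle_point_def)
  qed simp_all
qed

section \<open>The regular polygon in the plane\<close>

lemma polygon_code_exists:
  assumes "CARD('d) = 2" and "2 \<le> K"
  obtains W :: "nat \<Rightarrow> real^'d"
  where "W \<in> OB K" and "\<forall>k<K. 1 - cos (2 * pi / K) \<le> one_vs_rest_dist K W k"
proof -
  obtain u v :: "real^'d" where uv: "norm u = 1" "norm v = 1" "inner u v = 0"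
    using planar_circle_parametrization[OF assms(1)] by blast
  define W where "W k = circle_point u v (2 * pi * k / K)" for k :: nat
  have "W \<in> OB K" by (simp add: OB_def W_def norm_circle_point[OF uv])
  moreover have "\<forall>k<K. 1 - cos (2 * pi / K) \<le> one_vs_rest_dist K W k"
    using \<open>W \<in> OB K\<close> assms(2)
    by (rule one_minus_le_one_vs_rest_dist)
      (simp add: W_def inner_circle_point[OF uv] cos_two_pi_frac_diff_le)
  ultimately show thesis by (rule that)
qed

lemma one_vs_rest_dist_le_by_neighbours:
  fixes W :: "nat \<Rightarrow> real^'d"
  assumes uv: "norm u = 1" "norm v = 1" "inner u v = 0"
    and "j1 < K" and "j2 < K" and "j1 \<noteq> k" and "j2 \<noteq> k"
    and "W k = circle_point u v \<theta>"
    and "W j1 = circle_point u v (\<theta> - g1)" and "W j2 = circle_point u v (\<theta> + g2)"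
    and "0 \<le> g1" and "0 \<le> g2" and "g1 + g2 \<le> pi"
  shows "one_vs_rest_dist K W k \<le> 1 - cos ((g1 + g2) / 2)"
proof -
  define u' where "u' = circle_point u v \<theta>"
  define v' where "v' = circle_point u v (\<theta> + pi / 2)"
  have "norm u' = 1" "norm v' = 1" "inner u' v' = 0"
    by (simp_all add: u'_def v'_def norm_circle_point[OF uv] inner_circle_point[OF uv])
  then obtain x where x: "x \<in> closed_segment (circle_point u' v' (- g1)) (circle_point u' v' g2)"
    and near: "norm (u' - x) \<le> 1 - cos ((g1 + g2) / 2)"
    using closed_segment_circle_points_near assms(11-13) by blast
  have "x \<in> closed_segment (W j1) (W j2)"
    using x assms(9,10) by (simp add: u'_def v'_def circle_point_rotate)
  also have "\<dots> \<subseteq> convex hull {W j | j. j < K \<and> j \<noteq> k}"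
    unfolding segment_convex_hull using assms(4-7) by (intro hull_mono) auto
  finally have "one_vs_rest_dist K W k \<le> norm (W k - x)"
    unfolding one_vs_rest_dist_def by (rule dist_hull_le_norm)
  with near show ?thesis using assms(8) by (simp add: u'_def)
qed

definition cyclic_gap :: "real list \<Rightarrow> nat \<Rightarrow> real" where
  "cyclic_gap L i = (if Suc i < length L then L ! Suc i - L ! i else L ! 0 + 2 * pi - L ! i)"

lemma cyclic_gap_nonneg:
  assumes "sorted_wrt (<) L" and "set L \<subseteq> {0..<2 * pi}" and "i < length L"
  shows "0 \<le> cyclic_gap L i"
proof (cases "Suc i < length L")
  case True
  then show ?thesis using assms(1) by (simp add: cyclic_gap_def sorted_wrt_iff_nth_less less_imp_le)
next
  case False
  have "L ! 0 \<in> set L" "L ! i \<in> set L" using assms(3) by (auto intro: nth_mem)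
  with assms(2) have "L ! 0 \<in> {0..<2 * pi}" "L ! i \<in> {0..<2 * pi}" by blast+
  then show ?thesis using False by (simp add: cyclic_gap_def)
qed

lemma sum_cyclic_gap:
  assumes "L \<noteq> []"
  shows "(\<Sum>i<length L. cyclic_gap L i) = 2 * pi"
proof -
  obtain n where n: "length L = Suc n" using assms by (cases L) auto
  have "(\<Sum>i<n. cyclic_gap L i) = (\<Sum>i<n. L ! Suc i - L ! i)"
    using n by (intro sum.cong) (auto simp: cyclic_gap_def)
  also have "\<dots> = L ! n - L ! 0" by (rule sum_lessThan_telescope)
  finally show ?thesis using n by (simp add: cyclic_gap_def)
qed

lemma nth_add_cyclic_gap:
  assumes "i < length L"
  shows "L ! i + cyclic_gap L i = L ! (Suc i mod length L) + (if Suc i = length L then 2 * pi else 0)"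
  using assms by (auto simp: cyclic_gap_def)

lemma circle_point_add_cyclic_gap:
  assumes "i < length L"
  shows "circle_point u v (L ! i + cyclic_gap L i) = circle_point u v (L ! (Suc i mod length L))"
proof (cases "Suc i = length L")
  case True
  then have "L ! i + cyclic_gap L i = L ! (Suc i mod length L) + 2 * pi"
    using nth_add_cyclic_gap[OF assms] by simp
  then show ?thesis by (simp add: circle_point_add_2pi)
next
  case False
  then show ?thesis using nth_add_cyclic_gap[OF assms] by simp
qed

lemma circle_point_diff_cyclic_gap:
  assumes "i < length L"
  shows "circle_point u v (L ! (Suc i mod length L) - cyclic_gap L i) = circle_point u v (L ! i)"
proof (cases "Suc i = length L")
  case True
  then have "L ! (Suc i mod length L) - cyclic_gap L i = L ! i - 2 * pi"
    using nth_add_cyclic_gap[OF assms] by simp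
  then show ?thesis by (simp add: circle_point_diff_2pi)
next
  case False
  then have "L ! (Suc i mod length L) - cyclic_gap L i = L ! i"
    using nth_add_cyclic_gap[OF assms] by simp
  then show ?thesis by simp
qed

lemma sorted_enumeration_exists:
  fixes \<theta> :: "nat \<Rightarrow> 'a::linorder"
  assumes "inj_on \<theta> {..<K}"
  obtains L \<sigma> where "sorted_wrt (<) L" and "set L = \<theta> ` {..<K}" and "length L = K"
    and "bij_betw \<sigma> {..<K} {..<K}" and "\<And>i. i < K \<Longrightarrow> L ! i = \<theta> (\<sigma> i)"
proof -
  obtain L where L: "sorted_wrt (<) L" "set L = \<theta> ` {..<K}" "length L = card (\<theta> ` {..<K})"
    using finite_set_strict_sorted[of "\<theta> ` {..<K}"] by blast
  have len: "length L = K" using L(3) assms by (simp add: card_image)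
  define \<sigma> where "\<sigma> i = inv_into {..<K} \<theta> (L ! i)" for i
  have "bij_betw ((!) L) {..<K} (\<theta> ` {..<K})"
    using L len by (intro bij_betw_nth) (simp_all add: strict_sorted_iff)
  moreover have "bij_betw (inv_into {..<K} \<theta>) (\<theta> ` {..<K}) {..<K}"
    using assms by (intro bij_betw_inv_into inj_on_imp_bij_betw)
  ultimately have "bij_betw \<sigma> {..<K} {..<K}"
    unfolding \<sigma>_def by (rule bij_betw_trans[unfolded comp_def])
  moreover have "L ! i = \<theta> (\<sigma> i)" if "i < K" for i
    using that L(2) len unfolding \<sigma>_def by (metis f_inv_into_f nth_mem)
  ultimately show thesis using L(1,2) len that by blast
qed

lemma sorted_circle_enumeration:
  fixes W :: "nat \<Rightarrow> real^'d"
  assumes "CARD('d) = 2" and "W \<in> OB K" and "inj_on W {..<K}"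
  obtains u v L \<sigma> where "norm u = 1" and "norm v = 1" and "inner u v = 0"
    and "sorted_wrt (<) L" and "set L \<subseteq> {0..<2 * pi}" and "length L = K"
    and "bij_betw \<sigma> {..<K} {..<K}" and "\<And>i. i < K \<Longrightarrow> W (\<sigma> i) = circle_point u v (L ! i)"
proof -
  obtain u v :: "real^'d" where uv: "norm u = 1" "norm v = 1" "inner u v = 0"
    and param: "\<And>x. norm x = 1 \<Longrightarrow> \<exists>t. 0 \<le> t \<and> t < 2 * pi \<and> x = circle_point u v t"
    using planar_circle_parametrization[OF assms(1)] by blast
  have "\<forall>k<K. \<exists>t. t \<in> {0..<2 * pi} \<and> W k = circle_point u v t"
    using assms(2) param by (auto simp: OB_def)
  then obtain \<theta> where \<theta>: "\<And>k. k < K \<Longrightarrow> \<theta> k \<in> {0..<2 * pi} \<and> W k = circle_point u v (\<theta> k)"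
    by metis
  have "inj_on \<theta> {..<K}"
    using assms(3) \<theta> by (auto simp: inj_on_def)
  obtain L \<sigma> where L: "sorted_wrt (<) L" "set L = \<theta> ` {..<K}" "length L = K"
    and \<sigma>: "bij_betw \<sigma> {..<K} {..<K}" "\<And>i. i < K \<Longrightarrow> L ! i = \<theta> (\<sigma> i)"
    using sorted_enumeration_exists[OF \<open>inj_on \<theta> {..<K}\<close>] by blast
  have "set L \<subseteq> {0..<2 * pi}" using L(2) \<theta> by auto
  moreover have "W (\<sigma> i) = circle_point u v (L ! i)" if "i < K" for i
    using \<theta> \<sigma> that by (auto dest: bij_betwE)
  ultimately show thesis using that uv L(1,3) \<sigma>(1) by blast
qed

lemma one_vs_rest_dist_le_arc_of_neighbours:
  fixes W :: "nat \<Rightarrow> real^'d"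
  assumes uv: "norm u = 1" "norm v = 1" "inner u v = 0"
    and L: "sorted_wrt (<) L" "set L \<subseteq> {0..<2 * pi}" "length L = K"
    and \<sigma>: "bij_betw \<sigma> {..<K} {..<K}" "\<And>i. i < K \<Longrightarrow> W (\<sigma> i) = circle_point u v (L ! i)"
    and "2 \<le> K" and "p < K"
    and arc: "cyclic_gap L p + cyclic_gap L (Suc p mod K) \<le> pi"
  shows "one_vs_rest_dist K W (\<sigma> (Suc p mod K))
           \<le> 1 - cos ((cyclic_gap L p + cyclic_gap L (Suc p mod K)) / 2)"
proof -
  define i where "i = Suc p mod K"
  have i: "i < K" "p \<noteq> i" "Suc i mod K \<noteq> i" "Suc i mod K < K"
    using \<open>2 \<le> K\<close> \<open>p < K\<close> by (auto simp: i_def mod_Suc)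
  have inj: "inj_on \<sigma> {..<K}" using \<sigma>(1) by (rule bij_betw_imp_inj_on)
  show ?thesis
    unfolding i_def[symmetric]
  proof (rule one_vs_rest_dist_le_by_neighbours[OF uv])
    show "\<sigma> p < K" "\<sigma> (Suc i mod K) < K"
      using \<sigma>(1) i \<open>p < K\<close> by (auto dest: bij_betwE)
    show "\<sigma> p \<noteq> \<sigma> i" "\<sigma> (Suc i mod K) \<noteq> \<sigma> i"
      using inj_on_contraD[OF inj] i \<open>p < K\<close> by auto
    show "W (\<sigma> i) = circle_point u v (L ! i)" by (rule \<sigma>(2)[OF \<open>i < K\<close>])
    show "W (\<sigma> p) = circle_point u v (L ! i - cyclic_gap L p)"
      using \<sigma>(2)[OF \<open>p < K\<close>] circle_point_diff_cyclic_gap[of p L u v] \<open>p < K\<close> L(3)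
      by (simp add: i_def)
    show "W (\<sigma> (Suc i mod K)) = circle_point u v (L ! i + cyclic_gap L i)"
      using \<sigma>(2)[OF i(4)] circle_point_add_cyclic_gap[of i L u v] i L(3) by simp
    show "0 \<le> cyclic_gap L p" "0 \<le> cyclic_gap L i"
      using cyclic_gap_nonneg[OF L(1,2)] i \<open>p < K\<close> L(3) by simp_all
    show "cyclic_gap L p + cyclic_gap L i \<le> pi" using arc by (simp add: i_def)
  qed
qed

lemma sum_lessThan_Suc_mod:
  fixes f :: "nat \<Rightarrow> 'a::comm_monoid_add"
  shows "(\<Sum>i<K. f (Suc i mod K)) = (\<Sum>i<K. f i)"
proof (cases K)
  case (Suc n)
  have "(\<Sum>i<Suc n. f (Suc i mod Suc n)) = (\<Sum>i<n. f (Suc i)) + f 0"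
    by (simp add: mod_Suc)
  also have "\<dots> = (\<Sum>i<Suc n. f i)" unfolding sum.lessThan_Suc_shift by (rule add.commute)
  finally show ?thesis using Suc by simp
qed simp

lemma ex_Suc_mod_eq:
  assumes "i < K"
  shows "\<exists>p<K. Suc p mod K = i"
proof (cases i)
  case 0
  then show ?thesis using assms by (intro exI[of _ "K - 1"]) auto
next
  case (Suc m)
  then show ?thesis using assms by (intro exI[of _ m]) simp
qed

lemma one_vs_rest_dists_eq_polygon_bound:
  fixes W :: "nat \<Rightarrow> real^'d"
  assumes "CARD('d) = 2" and "4 \<le> K" and W: "W \<in> OB K"
    and bound: "\<forall>k<K. 1 - cos (2 * pi / K) \<le> one_vs_rest_dist K W k"
  shows "\<forall>k<K. one_vs_rest_dist K W k = 1 - cos (2 * pi / K)"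
proof -
  have angle: "0 < 2 * pi / K" "2 * pi / K \<le> pi / 2" using \<open>4 \<le> K\<close> by (auto simp: field_simps)
  then have "cos (2 * pi / K) < cos 0" by (subst cos_mono_less_eq) auto
  then have "\<forall>k<K. 0 < one_vs_rest_dist K W k" using bound by force
  then obtain u v L \<sigma> where uv: "norm u = 1" "norm v = 1" "inner u v = 0"
    and L: "sorted_wrt (<) L" "set L \<subseteq> {0..<2 * pi}" "length L = K"
    and \<sigma>: "bij_betw \<sigma> {..<K} {..<K}" "\<And>i. i < K \<Longrightarrow> W (\<sigma> i) = circle_point u v (L ! i)"
    using sorted_circle_enumeration[OF assms(1) W inj_on_if_one_vs_rest_dist_pos] by blast
  define t where "t p = cyclic_gap L p + cyclic_gap L (Suc p mod K)" for p
  \<comment> \<open>the arc spanned by the two neighbours of the point following the p-th one\<close>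
  have dist_le: "one_vs_rest_dist K W (\<sigma> (Suc p mod K)) \<le> 1 - cos (t p / 2)"
    if "p < K" "t p \<le> pi" for p
    using one_vs_rest_dist_le_arc_of_neighbours[OF uv L \<sigma>] \<open>4 \<le> K\<close> that by (simp add: t_def)
  have t_ge: "4 * pi / K \<le> t p" if "p < K" for p
  proof (rule ccontr)
    assume "\<not> 4 * pi / K \<le> t p"
    then have small: "t p / 2 < 2 * pi / K" by simp
    have "0 \<le> t p"
      using cyclic_gap_nonneg[OF L(1,2)] that L(3) \<open>4 \<le> K\<close> by (simp add: t_def)
    with small angle have "t p \<le> pi" by linarith
    have "cos (2 * pi / K) < cos (t p / 2)"
      using small angle \<open>0 \<le> t p\<close> by (subst cos_mono_less_eq) auto
    moreover have "\<sigma> (Suc p mod K) < K" using \<sigma>(1) \<open>4 \<le> K\<close> by (auto dest: bij_betwE)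
    ultimately show False using dist_le[OF that \<open>t p \<le> pi\<close>] bound by fastforce
  qed
  have "L \<noteq> []" using L(3) \<open>4 \<le> K\<close> by auto
  then have "(\<Sum>p<K. t p) = real K * (4 * pi / K)"
    using sum_cyclic_gap[of L] sum_lessThan_Suc_mod[of "cyclic_gap L" K] L(3) \<open>4 \<le> K\<close>
    by (simp add: t_def sum.distrib)
  then have t_eq: "\<forall>p\<in>{..<K}. t p = 4 * pi / K"
    using t_ge by (intro sum_le_card_mult_imp_eq) auto
  show ?thesis
  proof (intro allI impI antisym)
    fix k assume "k < K"
    then obtain i where i: "i < K" "k = \<sigma> i" using \<sigma>(1) by (metis bij_betw_def imageE lessThan_iff)
    obtain p where p: "p < K" "Suc p mod K = i" using ex_Suc_mod_eq[OF i(1)] by blast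
    then have "t p / 2 = 2 * pi / K" and "t p \<le> pi" using t_eq angle by auto
    with p i dist_le show "one_vs_rest_dist K W k \<le> 1 - cos (2 * pi / K)" by metis
  qed (use bound in auto)
qed

theorem mainTheorem7:
  fixes K :: nat and W :: "nat \<Rightarrow> real^'d"
  assumes "K \<ge> 2"
    and "CARD('d) = 2 \<or> K \<le> CARD('d) + 1"
    and "softmax_code K W"
  shows "\<forall>k<K. one_vs_rest_dist K W k = rho_one_vs_rest K W"
proof -
  have "1 \<le> K" using assms(1) by simp
  show ?thesis
  proof (cases "K \<le> CARD('d) + 1")
    case True
    obtain W0 :: "nat \<Rightarrow> real^'d"
      where W0: "W0 \<in> OB K" "\<forall>k<K. real K / (real K - 1) \<le> one_vs_rest_dist K W0 k"
      using simplex_code_exists[OF assms(1) True] by blast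
    show ?thesis
      by (rule softmax_code_dists_eq_rho[OF \<open>1 \<le> K\<close> assms(3) W0
            one_vs_rest_dists_eq_simplex_bound[OF assms(1)]])
  next
    case False
    with assms(2) have "CARD('d) = 2" "4 \<le> K" by auto
    obtain W0 :: "nat \<Rightarrow> real^'d"
      where W0: "W0 \<in> OB K" "\<forall>k<K. 1 - cos (2 * pi / K) \<le> one_vs_rest_dist K W0 k"
      using polygon_code_exists[OF \<open>CARD('d) = 2\<close> assms(1)] by blast
    show ?thesis
      by (rule softmax_code_dists_eq_rho[OF \<open>1 \<le> K\<close> assms(3) W0
            one_vs_rest_dists_eq_polygon_bound[OF \<open>CARD('d) = 2\<close> \<open>4 \<le> K\<close>]])
  qed
qed

end
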